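(* Let $\mathbf L=\{L_1,\dots,L_n\}$ be a finite multiset of positive rationals and $k\in\mathbb N_{>0}$, and suppose $L_{co}\neq l^\star$. Then $(I_{co},\,i\mapsto 1,\,i\mapsto k)$ is an admissible restriction. Moreover $|\mathcal C(I_{co},1,k)|=k\cdot|I_{co}|\le k\cdot\min(k-1,n)$, with equality when the $L_i$ are pairwise distinct; in particular the worst-case size is $\Theta(k\cdot\min(k,n))$.
   Context: For $l\in\mathbb Q_{>0}$: $m(l)=\sum_{i=1}^n\lfloor L_i/l\rfloor$, $c(l)=\sum_i(\lceil L_i/l\rceil-1)$; $l$ is feasible if $m(l)\ge k$; $l^\star$ is the unique optimal cut length (feasible length minimizing $c$ among feasible lengths; equals the largest feasible length). $L^{(k)}$ denotes the $k$-th largest element of $\mathbf L$ counted with multiplicity. The cut-off length is $L_{co}=L^{(k)}$ if $k\le n$ and $L_{co}=0$ if $k>n$; $I_{co}=\{i\in[1..n]: L_i>L_{co}\}$. Candidate multiset: $\mathcal C(I,f_l,f_u)=\biguplus_{i\in I}\{L_i/j: j\in\mathbb N,\ f_l(i)\le j\le f_u(i)\}$ (one occurrence per pair $(i,j)$). A triple $(I,f_l,f_u)$ with $I\subseteq[1..n]$, $f_l,f_u:I\to\mathbb N_{>0}$ is an admissible restriction if (i) for all $i\in I$, $f_l(i)=1$ or $L_i/(f_l(i)-1)$ is infeasible; (ii) for all $i\in I$, $L_i/f_u(i)$ is feasible; (iii) for all $i'\notin I$, $L_{i'}$ is feasible and $L_{i'}\ne l^\star$. *)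

theory Defs
  imports Complex_Main "HOL-Library.Multiset"
begin

text \<open>The multiset L = {L_1,...,L_n} is represented by a function L :: nat => rat
  on the index set {1..n}.\<close>

definition m_cnt :: "(nat \<Rightarrow> rat) \<Rightarrow> nat \<Rightarrow> rat \<Rightarrow> int" where
  "m_cnt L n l = (\<Sum>i\<in>{1..n}. \<lfloor>L i / l\<rfloor>)"

definition c_cost :: "(nat \<Rightarrow> rat) \<Rightarrow> nat \<Rightarrow> rat \<Rightarrow> int" where
  "c_cost L n l = (\<Sum>i\<in>{1..n}. \<lceil>L i / l\<rceil> - 1)"

definition feasible :: "(nat \<Rightarrow> rat) \<Rightarrow> nat \<Rightarrow> nat \<Rightarrow> rat \<Rightarrow> bool" where
  "feasible L n k l \<longleftrightarrow> l > 0 \<and> m_cnt L n l \<ge> int k"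

definition lstar :: "(nat \<Rightarrow> rat) \<Rightarrow> nat \<Rightarrow> nat \<Rightarrow> rat" where
  "lstar L n k = (GREATEST l. feasible L n k l)"

definition kth_largest :: "(nat \<Rightarrow> rat) \<Rightarrow> nat \<Rightarrow> nat \<Rightarrow> rat" where
  "kth_largest L n k = rev (sort (map L [1..<n+1])) ! (k - 1)"

definition cutoff :: "(nat \<Rightarrow> rat) \<Rightarrow> nat \<Rightarrow> nat \<Rightarrow> rat" where
  "cutoff L n k = (if k \<le> n then kth_largest L n k else 0)"

definition Ico :: "(nat \<Rightarrow> rat) \<Rightarrow> nat \<Rightarrow> nat \<Rightarrow> nat set" where
  "Ico L n k = {i \<in> {1..n}. L i > cutoff L n k}"

definition cands :: "(nat \<Rightarrow> rat) \<Rightarrow> nat set \<Rightarrow> (nat \<Rightarrow> nat) \<Rightarrow> (nat \<Rightarrow> nat) \<Rightarrow> rat multiset" where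
  "cands L I fl fu = image_mset (\<lambda>(i, j). L i / of_nat j) (mset_set (SIGMA i:I. {fl i..fu i}))"

definition admissible ::
  "(nat \<Rightarrow> rat) \<Rightarrow> nat \<Rightarrow> nat \<Rightarrow> nat set \<Rightarrow> (nat \<Rightarrow> nat) \<Rightarrow> (nat \<Rightarrow> nat) \<Rightarrow> bool" where
  "admissible L n k I fl fu \<longleftrightarrow>
     I \<subseteq> {1..n} \<and> (\<forall>i\<in>I. fl i > 0 \<and> fu i > 0) \<and>
     (\<forall>i\<in>I. fl i = 1 \<or> \<not> feasible L n k (L i / of_nat (fl i - 1))) \<and>
     (\<forall>i\<in>I. feasible L n k (L i / of_nat (fu i))) \<and>
     (\<forall>i'\<in>{1..n} - I. feasible L n k (L i') \<and> L i' \<noteq> lstar L n k)"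

end

theory Submission
  imports Defs
begin

text \<open>For \<open>k \<le> n\<close> at least \<open>k\<close> pieces are as long as the cut-off length, so it is
  feasible and hence below \<open>l\<^sup>\<star>\<close>, strictly by hypothesis; every piece outside \<open>I\<^sub>c\<^sub>o\<close>
  is at most \<open>L\<^sub>c\<^sub>o\<close>, hence feasible and different from \<open>l\<^sup>\<star>\<close>. The upper bound \<open>L\<^sub>i / k\<close> is
  feasible because \<open>L\<^sub>i\<close> alone yields \<open>k\<close> pieces. Fewer than \<open>k\<close> pieces are strictly
  longer than the \<open>k\<close>-th longest, exactly \<open>k - 1\<close> when the lengths are distinct. That
  \<open>l\<^sup>\<star>\<close> exists at all follows since every feasible length is dominated by a feasible one of
  the form \<open>L\<^sub>i / j\<close> with \<open>1 \<le> j \<le> k\<close>, a finite set.\<close>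

lemma card_nth_sort: "card {i. i < length xs \<and> P (sort xs ! i)} = length (filter P xs)"
proof -
  have "card {i. i < length xs \<and> P (sort xs ! i)} = length (filter P (sort xs))"
    by (simp add: length_filter_conv_card)
  also have "\<dots> = length (filter P xs)"
    by (metis mset_filter mset_sort size_mset)
  finally show ?thesis .
qed

lemma card_filter_map_upt:
  "card {i \<in> {1..n}. P (L i)} = length (filter P (map L [1..<n+1]))"
proof -
  have "length (filter P (map L [1..<n+1])) = card {i \<in> set [1..<n+1]. P (L i)}"
    by (simp add: filter_map distinct_length_filter Int_def conj_commute del: upt_Suc)
  then show ?thesis by (simp add: atLeastLessThanSuc_atLeastAtMost del: upt_Suc)
qed

lemma card_filter_eq_card_sorted:
  "card {i \<in> {1..n}. P (L i)} = card {i. i < n \<and> P (sort (map L [1..<n+1]) ! i)}"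
  unfolding card_filter_map_upt using card_nth_sort[of "map L [1..<n+1]" P] by (simp del: upt_Suc)

lemma sorted_nth_less_subset:
  assumes "sorted xs" "j < length xs"
  shows "{i. i < length xs \<and> xs ! j < xs ! i} \<subseteq> {j<..<length xs}"
  using assms by (auto simp: not_less dest: sorted_nth_mono[of xs _ j] intro: ccontr)

lemma sorted_nth_le_superset:
  assumes "sorted xs"
  shows "{j..<length xs} \<subseteq> {i. i < length xs \<and> xs ! j \<le> xs ! i}"
  using assms by (auto intro: sorted_nth_mono)

lemma sorted_distinct_nth_less_eq:
  assumes "sorted xs" "distinct xs" "j < length xs"
  shows "{i. i < length xs \<and> xs ! j < xs ! i} = {j<..<length xs}"
proof
  show "{j<..<length xs} \<subseteq> {i. i < length xs \<and> xs ! j < xs ! i}"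
    using assms by (auto simp: order.strict_iff_order nth_eq_iff_index_eq intro: sorted_nth_mono)
qed (rule sorted_nth_less_subset[OF assms(1,3)])

lemma sum_min_ge:
  fixes f :: "'a \<Rightarrow> int"
  assumes "finite A" "\<forall>i\<in>A. 0 \<le> f i" "0 \<le> k" "k \<le> sum f A"
  shows "k \<le> (\<Sum>i\<in>A. min (f i) k)"
proof (cases "\<exists>i\<in>A. k \<le> f i")
  case True
  then obtain i where "i \<in> A" "k \<le> f i" by blast
  then have "k = min (f i) k" by simp
  also have "\<dots> \<le> (\<Sum>i\<in>A. min (f i) k)"
    using assms \<open>i \<in> A\<close> by (intro member_le_sum) auto
  finally show ?thesis .
next
  case False
  then have "(\<Sum>i\<in>A. min (f i) k) = sum f A" by (intro sum.cong) auto
  then show ?thesis using assms(4) by simp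
qed

lemma card_ge_le_m_cnt:
  assumes "0 < l" "l \<le> c" "\<forall>i\<in>{1..n}. L i > 0"
  shows "int (card {i \<in> {1..n}. c \<le> L i}) \<le> m_cnt L n l"
proof -
  have "int (card {i \<in> {1..n}. c \<le> L i}) = (\<Sum>i\<in>{1..n}. if c \<le> L i then 1 else 0)"
    by (simp add: sum.If_cases Int_def conj_commute)
  also have "\<dots> \<le> (\<Sum>i\<in>{1..n}. \<lfloor>L i / l\<rfloor>)"
  proof (rule sum_mono)
    fix i assume "i \<in> {1..n}"
    then have "0 \<le> L i / l" and "c \<le> L i \<Longrightarrow> 1 \<le> L i / l"
      using assms by (auto simp: field_simps less_imp_le)
    then show "(if c \<le> L i then 1 else 0) \<le> \<lfloor>L i / l\<rfloor>"
      by simp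
  qed
  finally show ?thesis by (simp add: m_cnt_def)
qed

lemma feasible_if_card_ge:
  assumes "0 < l" "l \<le> c" "\<forall>i\<in>{1..n}. L i > 0" "k \<le> card {i \<in> {1..n}. c \<le> L i}"
  shows "feasible L n k l"
  using card_ge_le_m_cnt[OF assms(1-3)] assms(1,4) by (simp add: feasible_def)

lemma feasible_div_k:
  assumes "\<forall>i\<in>{1..n}. L i > 0" "k > 0" "i \<in> {1..n}"
  shows "feasible L n k (L i / of_nat k)"
proof -
  have Li: "L i > 0" using assms by auto
  have "int k = \<lfloor>L i / (L i / of_nat k)\<rfloor>" using Li assms(2) by simp
  also have "\<dots> \<le> (\<Sum>j\<in>{1..n}. \<lfloor>L j / (L i / of_nat k)\<rfloor>)"
    using assms Li by (intro member_le_sum) (auto simp: less_imp_le)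
  finally show ?thesis using Li assms(2) by (simp add: feasible_def m_cnt_def)
qed

definition cut_lengths :: "(nat \<Rightarrow> rat) \<Rightarrow> nat \<Rightarrow> nat \<Rightarrow> rat set" where
  "cut_lengths L n k = (\<lambda>(i, j). L i / of_nat j) ` ({1..n} \<times> {1..k})"

lemma feasible_Min_div:
  assumes "finite T" "T \<noteq> {}" "T \<subseteq> {1..n}" "\<forall>i\<in>T. 0 < j i" "\<forall>i\<in>{1..n}. L i > 0"
    and "int k \<le> (\<Sum>i\<in>T. int (j i))"
  shows "feasible L n k (Min ((\<lambda>i. L i / of_nat (j i)) ` T))" (is "feasible L n k ?x")
proof -
  have "?x \<in> (\<lambda>i. L i / of_nat (j i)) ` T" using assms(1,2) by (intro Min_in) auto
  then have x0: "0 < ?x" using assms(3-5) by auto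
  have "(\<Sum>i\<in>T. int (j i)) \<le> (\<Sum>i\<in>T. \<lfloor>L i / ?x\<rfloor>)"
  proof (rule sum_mono)
    fix i assume "i \<in> T"
    then have "?x \<le> L i / of_nat (j i)" and "0 < j i" using assms(1,4) by auto
    then have "of_nat (j i) \<le> L i / ?x" using x0 by (simp add: field_simps)
    then show "int (j i) \<le> \<lfloor>L i / ?x\<rfloor>" by (simp add: le_floor_iff)
  qed
  also have "\<dots> \<le> (\<Sum>i\<in>{1..n}. \<lfloor>L i / ?x\<rfloor>)"
    using assms(3,5) x0 by (intro sum_mono2) (auto simp: less_imp_le)
  finally show ?thesis using assms(6) x0 by (simp add: feasible_def m_cnt_def)
qed

text \<open>Truncating each piece count \<open>\<lfloor>L\<^sub>i / l\<rfloor>\<close> at \<open>k\<close> keeps the total at least \<open>k\<close>, and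
  then the shortest of the lengths \<open>L\<^sub>i / j\<^sub>i\<close> is at least \<open>l\<close> and lies in \<^const>\<open>cut_lengths\<close>.\<close>
lemma feasible_le_cut_length:
  assumes F: "feasible L n k l" and pos: "\<forall>i\<in>{1..n}. L i > 0" and k: "0 < k"
  shows "\<exists>x\<in>cut_lengths L n k. feasible L n k x \<and> l \<le> x"
proof -
  have l0: "0 < l" and mk: "int k \<le> (\<Sum>i\<in>{1..n}. \<lfloor>L i / l\<rfloor>)"
    using F by (auto simp: feasible_def m_cnt_def)
  have floor_nonneg: "0 \<le> \<lfloor>L i / l\<rfloor>" if "i \<in> {1..n}" for i
    using that pos l0 by (simp add: less_imp_le)
  define j where "j i = nat (min \<lfloor>L i / l\<rfloor> (int k))" for i
  define T where "T = {i \<in> {1..n}. 0 < j i}"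
  have l_le: "l \<le> L i / of_nat (j i)" if "i \<in> T" for i
  proof -
    have "int (j i) \<le> \<lfloor>L i / l\<rfloor>" using that floor_nonneg[of i] by (simp add: T_def j_def)
    then have "of_nat (j i) \<le> L i / l" by (simp add: le_floor_iff)
    with that l0 show ?thesis by (simp add: T_def field_simps)
  qed
  have "int k \<le> (\<Sum>i\<in>{1..n}. int (j i))"
    using sum_min_ge[of "{1..n}" "\<lambda>i. \<lfloor>L i / l\<rfloor>" "int k"] mk floor_nonneg
    by (simp add: j_def)
  also have "\<dots> = (\<Sum>i\<in>T. int (j i))"
    by (rule sum.mono_neutral_right) (auto simp: T_def)
  finally have sum_j: "int k \<le> (\<Sum>i\<in>T. int (j i))" .
  then have "T \<noteq> {}" using k by auto
  have "finite T" by (simp add: T_def)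
  define x where "x = Min ((\<lambda>i. L i / of_nat (j i)) ` T)"
  have "feasible L n k x"
    unfolding x_def using \<open>finite T\<close> \<open>T \<noteq> {}\<close> pos sum_j
    by (intro feasible_Min_div) (auto simp: T_def)
  moreover have "l \<le> x" using \<open>finite T\<close> \<open>T \<noteq> {}\<close> l_le by (simp add: x_def)
  moreover have "x \<in> cut_lengths L n k"
  proof -
    have "x \<in> (\<lambda>i. L i / of_nat (j i)) ` T"
      unfolding x_def using \<open>finite T\<close> \<open>T \<noteq> {}\<close> by (intro Min_in) auto
    then obtain i where "i \<in> T" "x = L i / of_nat (j i)" by blast
    moreover have "j i \<le> k" by (simp add: j_def)
    ultimately show ?thesis
      unfolding cut_lengths_def by (intro image_eqI[where x = "(i, j i)"]) (auto simp: T_def)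
  qed
  ultimately show ?thesis by blast
qed

lemma lstar_greatest:
  assumes "feasible L n k l" "\<forall>i\<in>{1..n}. L i > 0" "0 < k"
  shows "feasible L n k (lstar L n k)" and "\<And>y. feasible L n k y \<Longrightarrow> y \<le> lstar L n k"
proof -
  define S where "S = {x \<in> cut_lengths L n k. feasible L n k x}"
  have finS: "finite S" by (simp add: S_def cut_lengths_def)
  have dominated: "\<exists>x\<in>S. y \<le> x" if "feasible L n k y" for y
    using feasible_le_cut_length[OF that assms(2,3)] by (auto simp: S_def)
  then have "S \<noteq> {}" using assms(1) by blast
  then have "Max S \<in> S" using finS by simp
  moreover have "y \<le> Max S" if "feasible L n k y" for y
    using dominated[OF that] finS by (auto intro: order_trans Max_ge)
  ultimately have "lstar L n k = Max S"
    unfolding lstar_def by (intro Greatest_equality) (auto simp: S_def)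
  then show "feasible L n k (lstar L n k)" and "\<And>y. feasible L n k y \<Longrightarrow> y \<le> lstar L n k"
    using \<open>Max S \<in> S\<close> \<open>\<And>y. feasible L n k y \<Longrightarrow> y \<le> Max S\<close> by (auto simp: S_def)
qed

lemma cutoff_eq_sorted_nth:
  assumes "0 < k" "k \<le> n"
  shows "cutoff L n k = sort (map L [1..<n+1]) ! (n - k)"
  using assms by (simp add: cutoff_def kth_largest_def rev_nth del: upt_Suc)

lemma card_gt_cutoff_le:
  assumes "0 < k" "k \<le> n"
  shows "card {i \<in> {1..n}. cutoff L n k < L i} \<le> k - 1"
proof -
  define zs where "zs = sort (map L [1..<n+1])"
  have "card {i \<in> {1..n}. cutoff L n k < L i} = card {i. i < n \<and> zs ! (n - k) < zs ! i}"
    unfolding cutoff_eq_sorted_nth[OF assms(1,2)] zs_def by (rule card_filter_eq_card_sorted)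
  also have "\<dots> \<le> card {n - k<..<n}"
    using sorted_nth_less_subset[of zs "n - k"] assms by (intro card_mono) (auto simp: zs_def)
  finally show ?thesis using assms by simp
qed

lemma card_ge_cutoff:
  assumes "0 < k" "k \<le> n"
  shows "k \<le> card {i \<in> {1..n}. cutoff L n k \<le> L i}"
proof -
  define zs where "zs = sort (map L [1..<n+1])"
  have "k = card {n - k..<n}" using assms by simp
  also have "\<dots> \<le> card {i. i < n \<and> zs ! (n - k) \<le> zs ! i}"
    using sorted_nth_le_superset[of zs "n - k"] by (intro card_mono) (auto simp: zs_def)
  also have "\<dots> = card {i \<in> {1..n}. cutoff L n k \<le> L i}"
    unfolding cutoff_eq_sorted_nth[OF assms(1,2)] zs_def
    by (rule card_filter_eq_card_sorted[symmetric])
  finally show ?thesis .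
qed

lemma card_gt_cutoff_eq:
  assumes "0 < k" "k \<le> n" "inj_on L {1..n}"
  shows "card {i \<in> {1..n}. cutoff L n k < L i} = k - 1"
proof -
  define zs where "zs = sort (map L [1..<n+1])"
  have "distinct zs" using assms(3)
    by (simp add: zs_def distinct_map atLeastLessThanSuc_atLeastAtMost del: upt_Suc)
  have "card {i \<in> {1..n}. cutoff L n k < L i} = card {i. i < n \<and> zs ! (n - k) < zs ! i}"
    unfolding cutoff_eq_sorted_nth[OF assms(1,2)] zs_def by (rule card_filter_eq_card_sorted)
  also have "\<dots> = card {n - k<..<n}"
    using sorted_distinct_nth_less_eq[of zs "n - k"] \<open>distinct zs\<close> assms
    by (simp add: zs_def)
  finally show ?thesis using assms by simp
qed

lemma Ico_eq_all:
  assumes "n < k" "\<forall>i\<in>{1..n}. L i > 0"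
  shows "Ico L n k = {1..n}"
  using assms by (auto simp: Ico_def cutoff_def)

lemma card_Ico_le:
  assumes "0 < k" "\<forall>i\<in>{1..n}. L i > 0"
  shows "card (Ico L n k) \<le> min (k - 1) n"
proof (cases "k \<le> n")
  case True
  then show ?thesis using card_gt_cutoff_le[OF assms(1) True] by (simp add: Ico_def)
next
  case False
  then show ?thesis using Ico_eq_all[OF _ assms(2)] by simp
qed

lemma card_Ico_eq:
  assumes "0 < k" "\<forall>i\<in>{1..n}. L i > 0" "inj_on L {1..n}"
  shows "card (Ico L n k) = min (k - 1) n"
proof (cases "k \<le> n")
  case True
  then show ?thesis using card_gt_cutoff_eq[OF assms(1) True assms(3)] by (simp add: Ico_def)
next
  case False
  then show ?thesis using Ico_eq_all[OF _ assms(2)] by simp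
qed

lemma admissible_Ico:
  assumes pos: "\<forall>i\<in>{1..n}. L i > 0" and k: "0 < k" and ne: "cutoff L n k \<noteq> lstar L n k"
  shows "admissible L n k (Ico L n k) (\<lambda>_. 1) (\<lambda>_. k)"
proof -
  have outside: "feasible L n k (L i) \<and> L i \<noteq> lstar L n k" if i: "i \<in> {1..n} - Ico L n k" for i
  proof -
    have "k \<le> n" using i Ico_eq_all[OF _ pos] by (cases "k \<le> n") auto
    define c where "c = cutoff L n k"
    have many: "k \<le> card {i \<in> {1..n}. c \<le> L i}"
      using card_ge_cutoff[OF k \<open>k \<le> n\<close>] by (simp add: c_def)
    have Li: "0 < L i" "L i \<le> c" using i pos by (auto simp: Ico_def c_def)
    have "feasible L n k c" using Li many pos by (intro feasible_if_card_ge) auto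
    then have "c < lstar L n k"
      using lstar_greatest[OF _ pos k] ne by (force simp: c_def order.strict_iff_order)
    then show ?thesis using Li many pos feasible_if_card_ge[of "L i" c n L k] by auto
  qed
  show ?thesis
    unfolding admissible_def using outside feasible_div_k[OF pos k] k by (auto simp: Ico_def)
qed

lemma size_cands_const:
  "finite I \<Longrightarrow> size (cands L I (\<lambda>_. 1) (\<lambda>_. k)) = k * card I"
  by (simp add: cands_def)

theorem mainTheorem6:
  fixes L :: "nat \<Rightarrow> rat" and n k :: nat
  assumes "n \<ge> 1"
    and "\<forall>i\<in>{1..n}. L i > 0"
    and "k > 0"
    and "cutoff L n k \<noteq> lstar L n k"
  shows "admissible L n k (Ico L n k) (\<lambda>_. 1) (\<lambda>_. k) \<and>
         size (cands L (Ico L n k) (\<lambda>_. 1) (\<lambda>_. k)) = k * card (Ico L n k) \<and>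
         k * card (Ico L n k) \<le> k * min (k - 1) n \<and>
         (inj_on L {1..n} \<longrightarrow>
            size (cands L (Ico L n k) (\<lambda>_. 1) (\<lambda>_. k)) = k * min (k - 1) n)"
proof -
  have size: "size (cands L (Ico L n k) (\<lambda>_. 1) (\<lambda>_. k)) = k * card (Ico L n k)"
    by (rule size_cands_const) (simp add: Ico_def)
  show ?thesis
    using admissible_Ico[OF assms(2-4)] size card_Ico_le[OF assms(3,2)]
      card_Ico_eq[OF assms(3,2)] by simp
qed

end
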